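(* Let $X$ and $Y$ be normed linear spaces and let $T : X \to Y$ be a bounded linear operator. Let $E$ be a linear subspace of $X$ that is a core of $T$, i.e. the graph of the restriction $T|_E$ is dense in the graph of $T$ (in $X \times Y$). Then \[ \Gamma(T|_E) = \Gamma(T), \quad \Delta(T|_E) = \Delta(T), \quad \tau(T|_E) = \tau(T), \quad \nabla(T|_E) = \nabla(T), \] where $T|_E : E \to Y$ is regarded as a bounded linear operator on the normed space $E$ (with the norm of $X$).
   Context: For a normed linear space $D$, let $\mathcal{I}(D)$ denote the collection of infinite dimensional linear subspaces of $D$. For a linear subspace $M$ of $D$, let $S_M = \{ m \in M : \|m\| = 1\}$. For a bounded linear operator $S : D \to Y$ and a subspace $M$ of $D$, $S|_M$ denotes the restriction of $S$ to $M$ and $\|S|_M\|$ its operator norm. Define \[ \Gamma(S) = \inf_{M \in \mathcal{I}(D)} \|S|_M\|, \qquad \Delta(S) = \sup_{M \in \mathcal{I}(D)} \Gamma(S|_M), \] \[ \tau(S) = \sup_{M \in \mathcal{I}(D)} \inf_{m \in S_M} \|Sm\|, \qquad \nabla(S) = \inf_{M \in \mathcal{I}(D)} \tau(S|_M), \] where for $M \in \mathcal{I}(D)$ the quantities $\Gamma(S|_M)$ and $\tau(S|_M)$ are computed with $D$ replaced by $M$ (so the infimum/supremum ranges over $\mathcal{I}(M)$). *)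

theory Defs
  imports "HOL-Analysis.Analysis"
begin

definition infdim_subspaces :: "'a::real_vector set \<Rightarrow> 'a set set" where
  "infdim_subspaces D = {M. subspace M \<and> M \<subseteq> D \<and> \<not> (\<exists>B. finite B \<and> span B = M)}"

definition unit_sphere_of :: "'a::real_normed_vector set \<Rightarrow> 'a set" where
  "unit_sphere_of M = {m \<in> M. norm m = 1}"

definition opnorm_on :: "'a::real_normed_vector set \<Rightarrow> ('a \<Rightarrow> 'b::real_normed_vector) \<Rightarrow> real" where
  "opnorm_on M S = (SUP m \<in> unit_sphere_of M. norm (S m))"

text \<open>The quantities, for an operator S regarded on the domain D (a subspace).\<close>
definition Gamma_op :: "'a::real_normed_vector set \<Rightarrow> ('a \<Rightarrow> 'b::real_normed_vector) \<Rightarrow> real" where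
  "Gamma_op D S = (INF M \<in> infdim_subspaces D. opnorm_on M S)"

definition Delta_op :: "'a::real_normed_vector set \<Rightarrow> ('a \<Rightarrow> 'b::real_normed_vector) \<Rightarrow> real" where
  "Delta_op D S = (SUP M \<in> infdim_subspaces D. Gamma_op M S)"

definition tau_op :: "'a::real_normed_vector set \<Rightarrow> ('a \<Rightarrow> 'b::real_normed_vector) \<Rightarrow> real" where
  "tau_op D S = (SUP M \<in> infdim_subspaces D. (INF m \<in> unit_sphere_of M. norm (S m)))"

definition nabla_op :: "'a::real_normed_vector set \<Rightarrow> ('a \<Rightarrow> 'b::real_normed_vector) \<Rightarrow> real" where
  "nabla_op D S = (INF M \<in> infdim_subspaces D. tau_op M S)"

end

theory Submission
  imports Defs
begin

text \<open>The hypothesis on the graph says that \<open>E\<close> is dense in \<open>X\<close>. Every infinite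
  dimensional subspace \<open>M\<close> of \<open>X\<close> contains a sequence \<open>x\<^sub>k\<close> whose coordinate functionals on
  its span are bounded, \<open>\<bar>a\<^sub>k\<bar> \<le> C\<^sub>k \<parallel>\<Sum> a\<^sub>j x\<^sub>j\<parallel>\<close> (built inductively with one-dimensional
  Hahn--Banach steps). Moving each \<open>x\<^sub>k\<close> into \<open>E\<close> by less than \<open>\<delta> / (2\<^sup>k\<^sup>+\<^sup>1 C\<^sub>k)\<close>
  defines a linear \<open>J\<close> on \<open>M' = span {x\<^sub>k}\<close> with \<open>\<parallel>J m - m\<parallel> \<le> \<delta> \<parallel>m\<parallel>\<close>. Such a \<open>J\<close> is
  injective, maps the infinite dimensional subspaces of \<open>M'\<close> onto those of \<open>J M' \<subseteq> E\<close>, and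
  moves unit spheres by at most \<open>4 \<delta>\<close>, so \<open>\<parallel>T|\<^sub>L\<parallel>\<close> and \<open>inf\<^sub>S\<^sub>L \<parallel>T m\<parallel>\<close> change by at
  most \<open>4 \<delta> \<parallel>T\<parallel>\<close>. So every infinite dimensional subspace of \<open>X\<close> has a counterpart in \<open>E\<close>
  with almost the same values on all its subspaces, which gives one inequality for each of the
  four quantities; the other one holds because subspaces of \<open>E\<close> are subspaces of \<open>X\<close>.\<close>

section \<open>One-step Hahn--Banach extension\<close>

lemma linear_functional_vanishing_on_subspace:
  fixes W :: "'a::real_vector set"
  assumes "subspace W" "z \<notin> W"
  obtains h :: "'a \<Rightarrow> real" where "linear h" "\<And>w. w \<in> W \<Longrightarrow> h w = 0" "h z = 1"
proof -
  obtain B where B: "B \<subseteq> W" "independent B" "W \<subseteq> span B"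
    using maximal_independent_subset by blast
  have W_eq: "W = span B"
    using B span_minimal[OF B(1) assms(1)] by blast
  have "z \<notin> span B" "z \<notin> B"
    using assms(2) W_eq span_base by auto
  then have "independent (insert z B)"
    using B(2) independent_insertI by blast
  then obtain h :: "'a \<Rightarrow> real" where h: "linear h" "\<And>v. v \<in> insert z B \<Longrightarrow> h v = (if v = z then 1 else 0)"
    using linear_independent_extend[of "insert z B" "\<lambda>v. if v = z then 1 else 0"] by blast
  have "h b = 0" if "b \<in> B" for b
    using h(2)[of b] that \<open>z \<notin> B\<close> by auto
  then have "h w = 0" if "w \<in> W" for w
    using linear_eq_0_on_span[OF h(1)] that W_eq by blast
  then show thesis
    using that h by simp
qed

lemma Hahn_Banach_constant:
  fixes f :: "'a::real_normed_vector \<Rightarrow> real"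
  assumes W: "subspace W" and f: "linear f" and "C \<ge> 0"
    and bound: "\<And>w. w \<in> W \<Longrightarrow> \<bar>f w\<bar> \<le> C * norm w"
  obtains c where "\<And>w. w \<in> W \<Longrightarrow> f w - C * norm (w - z) \<le> c"
    "\<And>w. w \<in> W \<Longrightarrow> c \<le> C * norm (w + z) - f w"
proof -
  have gap: "f w1 - C * norm (w1 - z) \<le> C * norm (w2 + z) - f w2" if "w1 \<in> W" "w2 \<in> W" for w1 w2
  proof -
    have "f w1 + f w2 \<le> C * norm (w1 + w2)"
      using bound[of "w1 + w2"] that W f by (simp add: subspace_add linear_add)
    also have "\<dots> \<le> C * (norm (w1 - z) + norm (w2 + z))"
      using norm_triangle_ineq[of "w1 - z" "w2 + z"] \<open>C \<ge> 0\<close> by (simp add: mult_left_mono)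
    finally show ?thesis
      by (simp add: algebra_simps)
  qed
  have "0 \<in> W"
    using W subspace_0 by blast
  show thesis
  proof (rule that)
    show "f w - C * norm (w - z) \<le> (SUP w\<in>W. f w - C * norm (w - z))" if "w \<in> W" for w
      using that gap[OF _ \<open>0 \<in> W\<close>] by (intro cSUP_upper bdd_aboveI2) auto
    show "(SUP w\<in>W. f w - C * norm (w - z)) \<le> C * norm (w + z) - f w" if "w \<in> W" for w
      using that gap \<open>0 \<in> W\<close> by (intro cSUP_least) auto
  qed
qed

lemma Hahn_Banach_scaled_bound:
  fixes f :: "'a::real_normed_vector \<Rightarrow> real"
  assumes f: "linear f" and W: "subspace W" "w \<in> W" and t: "t > 0"
    and c: "\<And>w. w \<in> W \<Longrightarrow> c \<le> C * norm (w + z) - f w"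
  shows "f w + t * c \<le> C * norm (w + t *\<^sub>R z)"
proof -
  have "c \<le> C * norm ((1 / t) *\<^sub>R w + z) - f ((1 / t) *\<^sub>R w)"
    using c W subspace_scale by blast
  also have "(1 / t) *\<^sub>R w + z = (1 / t) *\<^sub>R (w + t *\<^sub>R z)"
    using t by (simp add: scaleR_add_right)
  finally have "c \<le> (C * norm (w + t *\<^sub>R z) - f w) / t"
    using t f by (simp add: linear_scale diff_divide_distrib)
  then show ?thesis
    using t by (simp add: le_divide_eq algebra_simps)
qed

lemma Hahn_Banach_affine_bound:
  fixes f :: "'a::real_normed_vector \<Rightarrow> real"
  assumes f: "linear f" and W: "subspace W" "w \<in> W"
    and bound: "\<And>w. w \<in> W \<Longrightarrow> \<bar>f w\<bar> \<le> C * norm w"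
    and c_lower: "\<And>w. w \<in> W \<Longrightarrow> f w - C * norm (w - z) \<le> c"
    and c_upper: "\<And>w. w \<in> W \<Longrightarrow> c \<le> C * norm (w + z) - f w"
  shows "f w + t * c \<le> C * norm (w + t *\<^sub>R z)"
proof -
  consider "t = 0" | "t > 0" | "t < 0"
    by linarith
  then show ?thesis
  proof cases
    case 1
    then show ?thesis
      using bound[OF W(2)] by simp
  next
    case 2
    then show ?thesis
      using Hahn_Banach_scaled_bound[OF f W 2 c_upper] by simp
  next
    case 3
    have "\<And>w. w \<in> W \<Longrightarrow> - c \<le> C * norm (w + - z) - f w"
      using c_lower by fastforce
    then show ?thesis
      using Hahn_Banach_scaled_bound[OF f W, of "- t" "- c" C "- z"] 3 by simp
  qed
qed

lemma Hahn_Banach_span_insert: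
  fixes f :: "'a::real_normed_vector \<Rightarrow> real"
  assumes W: "subspace W" and f: "linear f" and "C \<ge> 0"
    and bound: "\<And>w. w \<in> W \<Longrightarrow> \<bar>f w\<bar> \<le> C * norm w"
  obtains g where "linear g" "\<And>w. w \<in> W \<Longrightarrow> g w = f w"
    "\<And>v. v \<in> span (insert z W) \<Longrightarrow> \<bar>g v\<bar> \<le> C * norm v"
proof (cases "z \<in> W")
  case True
  then have "span (insert z W) = W"
    using W by (metis span_eq_iff span_redundant)
  then show thesis
    using that f bound by simp
next
  case False
  obtain h :: "'a \<Rightarrow> real" where h: "linear h" "\<And>w. w \<in> W \<Longrightarrow> h w = 0" "h z = 1"
    using linear_functional_vanishing_on_subspace[OF W False] by blast
  obtain c where c_lower: "\<And>w. w \<in> W \<Longrightarrow> f w - C * norm (w - z) \<le> c"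
    and c_upper: "\<And>w. w \<in> W \<Longrightarrow> c \<le> C * norm (w + z) - f w"
    using Hahn_Banach_constant[OF W f \<open>C \<ge> 0\<close> bound] by blast
  define g where "g v = f v + (c - f z) * h v" for v
  have "linear g"
    unfolding g_def using f h(1) by (intro linearI) (auto simp: linear_add linear_scale algebra_simps)
  have g_le: "g v \<le> C * norm v" if v: "v \<in> span (insert z W)" for v
  proof -
    obtain t where "v - t *\<^sub>R z \<in> span W"
      using v unfolding span_insert by blast
    then have "v - t *\<^sub>R z \<in> W"
      using W by (metis span_eq_iff)
    then obtain w where w: "w \<in> W" "v = w + t *\<^sub>R z"
      by (metis diff_add_cancel)
    have "g v = f w + t * c"
      using w h f by (simp add: g_def linear_add linear_scale algebra_simps)
    then show ?thesis
      using Hahn_Banach_affine_bound[OF f W(1) w(1) bound c_lower c_upper] w(2) by simp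
  qed
  have "\<bar>g v\<bar> \<le> C * norm v" if "v \<in> span (insert z W)" for v
    using g_le[OF that] g_le[OF span_neg[OF that]] linear_neg[OF \<open>linear g\<close>] by simp
  then show thesis
    using that \<open>linear g\<close> h(2) by (simp add: g_def)
qed

section \<open>Sequences with bounded coordinate functionals\<close>

text \<open>The coordinate functionals of \<open>x 0, \<dots>, x (n - 1)\<close> on their span are bounded by the
  \<open>C k\<close>; asking this for every \<open>n\<close> with one \<open>C\<close> makes \<open>x\<close> a minimal sequence.\<close>

definition bounded_coefficients :: "nat \<Rightarrow> (nat \<Rightarrow> 'a::real_normed_vector) \<Rightarrow> (nat \<Rightarrow> real) \<Rightarrow> bool" where
  "bounded_coefficients n x C \<longleftrightarrow> (\<forall>a k. k < n \<longrightarrow> \<bar>a k\<bar> \<le> C k * norm (\<Sum>j<n. a j *\<^sub>R x j))"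

lemma bounded_coefficientsD:
  "bounded_coefficients n x C \<Longrightarrow> k < n \<Longrightarrow> \<bar>a k\<bar> \<le> C k * norm (\<Sum>j<n. a j *\<^sub>R x j)"
  by (simp add: bounded_coefficients_def)

lemma bounded_coefficients_cong:
  assumes "\<And>k. k < n \<Longrightarrow> x k = y k" "\<And>k. k < n \<Longrightarrow> C k = D k"
  shows "bounded_coefficients n x C \<longleftrightarrow> bounded_coefficients n y D"
proof -
  have "(\<Sum>j<n. a j *\<^sub>R x j) = (\<Sum>j<n. a j *\<^sub>R y j)" for a
    using assms(1) by (intro sum.cong) auto
  then show ?thesis
    using assms(2) by (simp add: bounded_coefficients_def)
qed

lemma sum_lessThan_indicator_scaleR:
  fixes x :: "nat \<Rightarrow> 'a::real_vector"
  assumes "k < n"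
  shows "(\<Sum>j<n. (if j = k then 1 else 0) *\<^sub>R x j) = x k"
proof -
  have "(\<Sum>j<n. (if j = k then 1 else 0) *\<^sub>R x j) = (\<Sum>j<n. if j = k then x j else 0)"
    by (rule sum.cong) auto
  then show ?thesis
    using assms by simp
qed

lemma bounded_coefficients_pos:
  assumes "bounded_coefficients n x C" "k < n"
  shows "C k > 0"
proof -
  have "1 \<le> C k * norm (x k)"
    using bounded_coefficientsD[OF assms, of "\<lambda>j. if j = k then 1 else 0"] assms(2)
    by (simp add: sum_lessThan_indicator_scaleR)
  then show ?thesis
    by (smt (verit) mult_nonpos_nonneg norm_ge_zero)
qed

lemma bounded_coefficients_inj_on:
  assumes "bounded_coefficients n x C"
  shows "inj_on x {..<n}"
proof (rule inj_onI)
  fix i j assume i: "i \<in> {..<n}" and j: "j \<in> {..<n}" and eq: "x i = x j"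
  define a :: "nat \<Rightarrow> real" where "a l = (if l = i then 1 else 0) - (if l = j then 1 else 0)" for l
  have "(\<Sum>l<n. a l *\<^sub>R x l) = x i - x j"
    using i j by (simp add: a_def scaleR_diff_left sum_subtractf sum_lessThan_indicator_scaleR)
  then have "\<bar>a i\<bar> \<le> 0"
    using bounded_coefficientsD[OF assms, of i a] i eq by simp
  then show "i = j"
    by (auto simp: a_def split: if_splits)
qed

lemma bounded_coefficients_independent:
  assumes "bounded_coefficients n x C"
  shows "independent (x ` {..<n})"
proof (rule independent_if_scalars_zero)
  fix u v assume sum: "(\<Sum>v\<in>x ` {..<n}. u v *\<^sub>R v) = 0" and v: "v \<in> x ` {..<n}"
  then obtain k where k: "k < n" "v = x k"
    by auto
  have "(\<Sum>j<n. u (x j) *\<^sub>R x j) = 0"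
    using sum by (simp add: sum.reindex[OF bounded_coefficients_inj_on[OF assms]])
  then show "u v = 0"
    using bounded_coefficientsD[OF assms k(1), of "\<lambda>j. u (x j)"] k by simp
qed simp

lemma span_image_lessThan:
  fixes x :: "nat \<Rightarrow> 'a::real_vector"
  shows "span (x ` {..<n}) = range (\<lambda>a. \<Sum>j<n. a j *\<^sub>R x j)"
proof
  show "range (\<lambda>a. \<Sum>j<n. a j *\<^sub>R x j) \<subseteq> span (x ` {..<n})"
    by (intro image_subsetI span_sum span_scale span_base) auto
  have "subspace (range (\<lambda>a. \<Sum>j<n. a j *\<^sub>R x j))"
    unfolding subspace_def
  proof (intro conjI ballI allI)
    show "0 \<in> range (\<lambda>a. \<Sum>j<n. a j *\<^sub>R x j)"
      by (rule range_eqI[of _ _ "\<lambda>_. 0"]) simp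
  next
    fix u v assume "u \<in> range (\<lambda>a. \<Sum>j<n. a j *\<^sub>R x j)" "v \<in> range (\<lambda>a. \<Sum>j<n. a j *\<^sub>R x j)"
    then obtain a b where "u = (\<Sum>j<n. a j *\<^sub>R x j)" "v = (\<Sum>j<n. b j *\<^sub>R x j)"
      by blast
    then show "u + v \<in> range (\<lambda>a. \<Sum>j<n. a j *\<^sub>R x j)"
      by (intro range_eqI[of _ _ "\<lambda>j. a j + b j"]) (simp add: scaleR_add_left sum.distrib)
  next
    fix c u assume "u \<in> range (\<lambda>a. \<Sum>j<n. a j *\<^sub>R x j)"
    then obtain a where "u = (\<Sum>j<n. a j *\<^sub>R x j)"
      by blast
    then show "c *\<^sub>R u \<in> range (\<lambda>a. \<Sum>j<n. a j *\<^sub>R x j)"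
      by (intro range_eqI[of _ _ "\<lambda>j. c * a j"]) (simp add: scaleR_sum_right)
  qed
  moreover have "x ` {..<n} \<subseteq> range (\<lambda>a. \<Sum>j<n. a j *\<^sub>R x j)"
  proof
    fix v assume "v \<in> x ` {..<n}"
    then obtain k where "k < n" "v = x k"
      by blast
    then show "v \<in> range (\<lambda>a. \<Sum>j<n. a j *\<^sub>R x j)"
      by (intro range_eqI[of _ _ "\<lambda>j. if j = k then 1 else 0"]) (simp add: sum_lessThan_indicator_scaleR)
  qed
  ultimately show "span (x ` {..<n}) \<subseteq> range (\<lambda>a. \<Sum>j<n. a j *\<^sub>R x j)"
    by (simp add: span_minimal)
qed

lemma span_range_obtain_sum:
  fixes x :: "nat \<Rightarrow> 'a::real_vector"
  assumes "v \<in> span (range x)"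
  obtains n a where "v = (\<Sum>j<n. a j *\<^sub>R x j)"
proof -
  obtain t r where t: "finite t" "t \<subseteq> range x" and v: "v = (\<Sum>u\<in>t. r u *\<^sub>R u)"
    using assms unfolding span_explicit by blast
  obtain I where "finite I" "t = x ` I"
    using finite_subset_image[OF t] by blast
  moreover obtain n where "I \<subseteq> {..<n}"
    using finite_nat_bounded[OF \<open>finite I\<close>] by blast
  ultimately have "t \<subseteq> x ` {..<n}"
    by blast
  moreover have "v \<in> span t"
    unfolding v by (intro span_sum span_scale span_base)
  ultimately have "v \<in> span (x ` {..<n})"
    using span_mono by blast
  then show thesis
    using that unfolding span_image_lessThan by blast
qed

lemma coefficient_functional:
  assumes bc: "bounded_coefficients n x C" and k: "k < n"
  obtains \<phi> :: "'a::real_normed_vector \<Rightarrow> real" where "linear \<phi>"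
    "\<And>j. j < n \<Longrightarrow> \<phi> (x j) = (if j = k then 1 else 0)"
    "\<And>v. v \<in> span (x ` {..<n}) \<Longrightarrow> \<bar>\<phi> v\<bar> \<le> C k * norm v"
proof -
  obtain \<phi> :: "'a \<Rightarrow> real"
    where \<phi>: "linear \<phi>" "\<And>v. v \<in> x ` {..<n} \<Longrightarrow> \<phi> v = (if v = x k then 1 else 0)"
    using linear_independent_extend[OF bounded_coefficients_independent[OF bc],
        of "\<lambda>v. if v = x k then 1 else 0"] by blast
  have \<phi>_x: "\<phi> (x j) = (if j = k then 1 else 0)" if "j < n" for j
    using \<phi>(2)[of "x j"] that k inj_onD[OF bounded_coefficients_inj_on[OF bc], of j k] by auto
  have "\<bar>\<phi> v\<bar> \<le> C k * norm v" if v_span: "v \<in> span (x ` {..<n})" for v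
  proof -
    obtain a where v: "v = (\<Sum>j<n. a j *\<^sub>R x j)"
      using v_span unfolding span_image_lessThan by blast
    have "\<phi> v = (\<Sum>j<n. a j * \<phi> (x j))"
      using \<phi>(1) v by (simp add: linear_sum linear_scale)
    also have "\<dots> = (\<Sum>j<n. if j = k then a j else 0)"
      by (rule sum.cong) (simp_all add: \<phi>_x)
    also have "\<dots> = a k"
      using k by simp
    finally show ?thesis
      using bounded_coefficientsD[OF bc k, of a] v by simp
  qed
  then show thesis
    using that \<phi>(1) \<phi>_x by blast
qed

lemma coefficient_functionals_span_insert:
  assumes bc: "bounded_coefficients n x C"
  obtains \<psi> :: "nat \<Rightarrow> 'a::real_normed_vector \<Rightarrow> real" where "\<And>k. k < n \<Longrightarrow> linear (\<psi> k)"
    "\<And>k j. k < n \<Longrightarrow> j < n \<Longrightarrow> \<psi> k (x j) = (if j = k then 1 else 0)"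
    "\<And>k v. k < n \<Longrightarrow> v \<in> span (insert z (x ` {..<n})) \<Longrightarrow> \<bar>\<psi> k v\<bar> \<le> C k * norm v"
proof -
  have span_eq: "span (insert z (span (x ` {..<n}))) = span (insert z (x ` {..<n}))"
    by (simp add: span_insert span_span)
  have "\<forall>k\<in>{..<n}. \<exists>\<psi>. linear \<psi> \<and> (\<forall>j<n. \<psi> (x j) = (if j = k then 1 else 0))
      \<and> (\<forall>v\<in>span (insert z (x ` {..<n})). \<bar>\<psi> v\<bar> \<le> C k * norm v)"
  proof
    fix k assume "k \<in> {..<n}"
    then have k: "k < n"
      by simp
    obtain \<phi> where \<phi>: "linear \<phi>" "\<And>j. j < n \<Longrightarrow> \<phi> (x j) = (if j = k then 1 else 0)"
      "\<And>v. v \<in> span (x ` {..<n}) \<Longrightarrow> \<bar>\<phi> v\<bar> \<le> C k * norm v"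
      using coefficient_functional[OF bc k] by blast
    obtain \<psi> where \<psi>: "linear \<psi>" "\<And>w. w \<in> span (x ` {..<n}) \<Longrightarrow> \<psi> w = \<phi> w"
      "\<And>v. v \<in> span (insert z (span (x ` {..<n}))) \<Longrightarrow> \<bar>\<psi> v\<bar> \<le> C k * norm v"
      using Hahn_Banach_span_insert[of "span (x ` {..<n})" \<phi> "C k"] \<phi>
        bounded_coefficients_pos[OF bc k] by auto
    have "\<psi> (x j) = (if j = k then 1 else 0)" if "j < n" for j
      using \<psi>(2)[of "x j"] \<phi>(2)[OF that] that by (simp add: span_base)
    then show "\<exists>\<psi>. linear \<psi> \<and> (\<forall>j<n. \<psi> (x j) = (if j = k then 1 else 0))
      \<and> (\<forall>v\<in>span (insert z (x ` {..<n})). \<bar>\<psi> v\<bar> \<le> C k * norm v)"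
      using \<psi>(1,3) span_eq by (intro exI[of _ \<psi>]) auto
  qed
  then obtain \<psi> where "\<forall>k\<in>{..<n}. linear (\<psi> k) \<and> (\<forall>j<n. \<psi> k (x j) = (if j = k then 1 else 0))
      \<and> (\<forall>v\<in>span (insert z (x ` {..<n})). \<bar>\<psi> k v\<bar> \<le> C k * norm v)"
    by (fastforce dest: bchoice)
  then show thesis
    by (intro that) auto
qed

lemma bounded_coefficients_SucI:
  fixes x :: "nat \<Rightarrow> 'a::real_normed_vector" and \<psi> :: "nat \<Rightarrow> 'a \<Rightarrow> real"
  assumes V: "subspace V" "y \<in> V" "\<And>j. j < n \<Longrightarrow> x j \<in> V" and "y \<noteq> 0"
    and \<psi>_lin: "\<And>k. k < n \<Longrightarrow> linear (\<psi> k)"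
    and \<psi>_x: "\<And>k j. k < n \<Longrightarrow> j < n \<Longrightarrow> \<psi> k (x j) = (if j = k then 1 else 0)"
    and \<psi>_y: "\<And>k. k < n \<Longrightarrow> \<psi> k y = 0"
    and \<psi>_bound: "\<And>k v. k < n \<Longrightarrow> v \<in> V \<Longrightarrow> \<bar>\<psi> k v\<bar> \<le> C k * norm v"
  shows "bounded_coefficients (Suc n) (x(n := y)) (C(n := (1 + (\<Sum>j<n. C j * norm (x j))) / norm y))"
  unfolding bounded_coefficients_def
proof (intro allI impI)
  fix a :: "nat \<Rightarrow> real" and k assume k: "k < Suc n"
  define g where "g = (\<Sum>j<n. a j *\<^sub>R x j)"
  define v where "v = g + a n *\<^sub>R y"
  have v_eq: "(\<Sum>j<Suc n. a j *\<^sub>R (x(n := y)) j) = v"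
    by (simp add: v_def g_def lessThan_Suc)
  have "v \<in> V"
    unfolding v_def g_def using V by (intro subspace_add subspace_sum subspace_scale) auto
  have coeff: "\<bar>a i\<bar> \<le> C i * norm v" if "i < n" for i
  proof -
    have "\<psi> i v = (\<Sum>j<n. a j * \<psi> i (x j))"
      using \<psi>_lin[OF that] \<psi>_y[OF that] by (simp add: v_def g_def linear_add linear_sum linear_scale)
    also have "\<dots> = (\<Sum>j<n. if j = i then a j else 0)"
      by (rule sum.cong) (simp_all add: \<psi>_x[OF that])
    finally have "\<psi> i v = a i"
      using that by simp
    then show ?thesis
      using \<psi>_bound[OF that \<open>v \<in> V\<close>] by simp
  qed
  have "norm g \<le> (\<Sum>j<n. norm (a j *\<^sub>R x j))"
    unfolding g_def by (rule norm_sum)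
  also have "\<dots> \<le> (\<Sum>j<n. C j * norm v * norm (x j))"
    using coeff by (intro sum_mono) (simp add: mult_right_mono)
  finally have g_bound: "norm g \<le> norm v * (\<Sum>j<n. C j * norm (x j))"
    by (simp add: sum_distrib_left algebra_simps)
  have "\<bar>a n\<bar> * norm y = norm (v - g)"
    by (simp add: v_def)
  also have "\<dots> \<le> norm v + norm g"
    by (rule norm_triangle_ineq4)
  also have "\<dots> \<le> (1 + (\<Sum>j<n. C j * norm (x j))) * norm v"
    using g_bound by (simp add: algebra_simps)
  finally have "\<bar>a n\<bar> \<le> (1 + (\<Sum>j<n. C j * norm (x j))) / norm y * norm v"
    using \<open>y \<noteq> 0\<close> by (simp add: field_simps)
  then show "\<bar>a k\<bar> \<le> (C(n := (1 + (\<Sum>j<n. C j * norm (x j))) / norm y)) k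
      * norm (\<Sum>j<Suc n. a j *\<^sub>R (x(n := y)) j)"
    using coeff k v_eq by (cases "k = n") auto
qed

text \<open>The new vector is a vector of \<open>M\<close> outside the span of the old ones, corrected so that
  the extended coordinate functionals of the old vectors vanish on it.\<close>

lemma bounded_coefficients_extend:
  fixes x :: "nat \<Rightarrow> 'a::real_normed_vector"
  assumes M: "subspace M" "\<nexists>B. finite B \<and> span B = M" and xM: "x ` {..<n} \<subseteq> M"
    and bc: "bounded_coefficients n x C"
  obtains y D where "y \<in> M" "bounded_coefficients (Suc n) (x(n := y)) (C(n := D))"
proof -
  have "span (x ` {..<n}) \<subseteq> M" "span (x ` {..<n}) \<noteq> M"
    using xM M by (auto simp: span_minimal)
  then obtain z where "z \<in> M" and z: "z \<notin> span (x ` {..<n})"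
    by blast
  define V where "V = span (insert z (x ` {..<n}))"
  obtain \<psi> :: "nat \<Rightarrow> 'a \<Rightarrow> real" where \<psi>_lin: "\<And>k. k < n \<Longrightarrow> linear (\<psi> k)"
    and \<psi>_x: "\<And>k j. k < n \<Longrightarrow> j < n \<Longrightarrow> \<psi> k (x j) = (if j = k then 1 else 0)"
    and \<psi>_bound: "\<And>k v. k < n \<Longrightarrow> v \<in> V \<Longrightarrow> \<bar>\<psi> k v\<bar> \<le> C k * norm v"
    unfolding V_def using coefficient_functionals_span_insert[OF bc, where z = z] by blast
  define y where "y = z - (\<Sum>k<n. \<psi> k z *\<^sub>R x k)"
  have x_V: "x j \<in> V" if "j < n" for j
    using that by (simp add: V_def span_base)
  have "y \<in> V"
    unfolding y_def V_def by (intro span_diff span_sum span_scale span_base) auto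
  have "(\<Sum>k<n. \<psi> k z *\<^sub>R x k) \<in> span (x ` {..<n})"
    by (intro span_sum span_scale span_base) auto
  then have "y \<noteq> 0"
    using z by (auto simp: y_def)
  have \<psi>_y: "\<psi> k y = 0" if "k < n" for k
  proof -
    have "\<psi> k y = \<psi> k z - (\<Sum>j<n. \<psi> j z * \<psi> k (x j))"
      using \<psi>_lin[OF that] by (simp add: y_def linear_diff linear_sum linear_scale)
    also have "(\<Sum>j<n. \<psi> j z * \<psi> k (x j)) = (\<Sum>j<n. if j = k then \<psi> k z else 0)"
      by (rule sum.cong) (simp_all add: \<psi>_x[OF that])
    finally show ?thesis
      using that by simp
  qed
  have "V \<subseteq> M"
    unfolding V_def using xM \<open>z \<in> M\<close> M(1) by (intro span_minimal) auto
  then show thesis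
    using that \<open>y \<in> V\<close> bounded_coefficients_SucI[OF _ \<open>y \<in> V\<close> x_V \<open>y \<noteq> 0\<close> \<psi>_lin \<psi>_x \<psi>_y \<psi>_bound]
    by (auto simp: V_def)
qed

lemma infinite_dimensional_bounded_coefficients_sequence:
  fixes M :: "'a::real_normed_vector set"
  assumes M: "subspace M" "\<nexists>B. finite B \<and> span B = M"
  obtains x C where "range x \<subseteq> M" "\<And>n. bounded_coefficients n x C"
proof -
  define P where "P n s \<longleftrightarrow> fst s ` {..<n} \<subseteq> M \<and> bounded_coefficients n (fst s) (snd s)"
    for n and s :: "(nat \<Rightarrow> 'a) \<times> (nat \<Rightarrow> real)"
  define Q where "Q n s s' \<longleftrightarrow> (\<forall>k<n. fst s' k = fst s k \<and> snd s' k = snd s k)"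
    for n and s s' :: "(nat \<Rightarrow> 'a) \<times> (nat \<Rightarrow> real)"
  have step: "\<exists>s'. P (Suc n) s' \<and> Q n s s'" if "P n s" for n s
  proof -
    obtain x C where s: "s = (x, C)"
      by fastforce
    have xM: "x ` {..<n} \<subseteq> M" and bc: "bounded_coefficients n x C"
      using that s by (auto simp: P_def)
    obtain y D where "y \<in> M" and bc': "bounded_coefficients (Suc n) (x(n := y)) (C(n := D))"
      using bounded_coefficients_extend[OF M xM bc] by blast
    then have "P (Suc n) (x(n := y), C(n := D)) \<and> Q n s (x(n := y), C(n := D))"
      using xM bc' s by (auto simp: P_def Q_def lessThan_Suc)
    then show ?thesis
      by blast
  qed
  have "P 0 (\<lambda>_. 0, \<lambda>_. 0)"
    by (simp add: P_def bounded_coefficients_def)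
  then obtain f where f: "\<And>n. P n (f n)" "\<And>n. Q n (f n) (f (Suc n))"
    using dependent_nat_choice[of P Q] step by blast
  define x where "x k = fst (f (Suc k)) k" for k
  define C where "C k = snd (f (Suc k)) k" for k
  have agree: "fst (f n) k = x k \<and> snd (f n) k = C k" if "k < n" for n k
    using that
  proof (induction n)
    case (Suc n)
    then show ?case
      using f(2)[of n] by (cases "k = n") (auto simp: Q_def x_def C_def)
  qed simp
  have "range x \<subseteq> M"
    using f(1) by (auto simp: P_def x_def)
  moreover have "bounded_coefficients n x C" for n
    using f(1)[of n] agree bounded_coefficients_cong[of n x "fst (f n)" C "snd (f n)"]
    by (auto simp: P_def)
  ultimately show thesis
    using that by blast
qed

lemma bounded_coefficients_sequence_inj:
  assumes "\<And>n. bounded_coefficients n x C"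
  shows "inj x"
proof (rule injI)
  fix i j assume "x i = x j"
  then show "i = j"
    using inj_onD[OF bounded_coefficients_inj_on[OF assms[of "Suc (max i j)"]]] by auto
qed

lemma bounded_coefficients_sequence_independent:
  assumes "\<And>n. bounded_coefficients n x C"
  shows "independent (range x)"
proof
  assume "dependent (range x)"
  then obtain t u v where t: "finite t" "t \<subseteq> range x" "v \<in> t" "u v \<noteq> 0" "(\<Sum>w\<in>t. u w *\<^sub>R w) = 0"
    unfolding dependent_explicit by blast
  then have "dependent t"
    unfolding dependent_explicit by blast
  obtain I where "finite I" "t = x ` I"
    using finite_subset_image[OF t(1,2)] by blast
  moreover obtain n where "I \<subseteq> {..<n}"
    using finite_nat_bounded[OF \<open>finite I\<close>] by blast
  ultimately have "dependent (x ` {..<n})"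
    using dependent_mono[OF \<open>dependent t\<close>] by blast
  then show False
    using bounded_coefficients_independent[OF assms] by blast
qed

section \<open>Near-identity maps into a dense subspace\<close>

lemma near_identity_inj_on:
  assumes J: "linear J" and M: "subspace M"
    and near: "\<And>m. m \<in> M \<Longrightarrow> norm (J m - m) \<le> \<delta> * norm m" and "\<delta> < 1"
  shows "inj_on J M"
proof (rule inj_onI)
  fix a b assume ab: "a \<in> M" "b \<in> M" "J a = J b"
  then have "norm (a - b) \<le> \<delta> * norm (a - b)"
    using near[of "a - b"] M J by (simp add: subspace_diff linear_diff norm_minus_commute)
  then have "(1 - \<delta>) * norm (a - b) \<le> 0"
    by (simp add: algebra_simps)
  then show "a = b"
    using \<open>\<delta> < 1\<close> by (simp add: mult_le_0_iff)
qed

lemma infdim_subspaces_mono: "A \<subseteq> B \<Longrightarrow> infdim_subspaces A \<subseteq> infdim_subspaces B"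
  by (auto simp: infdim_subspaces_def)

lemma infdim_subspaces_self: "M \<in> infdim_subspaces D \<Longrightarrow> M \<in> infdim_subspaces M"
  by (simp add: infdim_subspaces_def)

lemma unit_sphere_of_infdim_subspace:
  assumes "M \<in> infdim_subspaces D"
  shows "unit_sphere_of M \<noteq> {}"
proof -
  have "M \<noteq> {0}"
    using assms span_empty unfolding infdim_subspaces_def by force
  moreover have "0 \<in> M"
    using assms subspace_0 unfolding infdim_subspaces_def by blast
  ultimately obtain m where "m \<in> M" "m \<noteq> 0"
    by blast
  then have "sgn m \<in> unit_sphere_of M"
    using assms by (simp add: infdim_subspaces_def unit_sphere_of_def sgn_div_norm subspace_scale norm_sgn)
  then show ?thesis
    by blast
qed

lemma linear_image_finite_span_iff:
  assumes J: "linear J" and inj: "inj_on J M" and L: "subspace L" "L \<subseteq> M"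
  shows "(\<exists>B. finite B \<and> span B = J ` L) \<longleftrightarrow> (\<exists>B. finite B \<and> span B = L)"
proof
  assume "\<exists>B. finite B \<and> span B = J ` L"
  then obtain B where B: "finite B" "span B = J ` L"
    by blast
  then obtain B' where B': "B' \<subseteq> L" "finite B'" "B = J ` B'"
    using span_superset[of B] finite_subset_image[of B J L] by blast
  have "J ` span B' = J ` L"
    using B(2) B'(3) linear_span_image[OF J] by simp
  moreover have "span B' \<subseteq> L"
    using B'(1) L(1) by (simp add: span_minimal)
  ultimately have "span B' = L"
    using inj L(2) inj_on_image_eq_iff[of J M "span B'" L] by blast
  then show "\<exists>B. finite B \<and> span B = L"
    using B'(2) by blast
next
  assume "\<exists>B. finite B \<and> span B = L"
  then obtain B where "finite B" "span B = L"
    by blast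
  then show "\<exists>B. finite B \<and> span B = J ` L"
    using linear_span_image[OF J] by blast
qed

lemma infdim_subspaces_linear_image:
  assumes J: "linear J" and inj: "inj_on J M" and M: "subspace M"
  shows "infdim_subspaces (J ` M) = (\<lambda>L. J ` L) ` infdim_subspaces M"
proof
  show "(\<lambda>L. J ` L) ` infdim_subspaces M \<subseteq> infdim_subspaces (J ` M)"
  proof (rule image_subsetI)
    fix L assume "L \<in> infdim_subspaces M"
    then have L: "subspace L" "L \<subseteq> M" "\<nexists>B. finite B \<and> span B = L"
      by (auto simp: infdim_subspaces_def)
    then show "J ` L \<in> infdim_subspaces (J ` M)"
      using linear_image_finite_span_iff[OF J inj L(1,2)] linear_subspace_image[OF J L(1)]
      by (auto simp: infdim_subspaces_def)
  qed
next
  show "infdim_subspaces (J ` M) \<subseteq> (\<lambda>L. J ` L) ` infdim_subspaces M"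
  proof
    fix L assume L: "L \<in> infdim_subspaces (J ` M)"
    define L' where "L' = {m \<in> M. J m \<in> L}"
    have "subspace L'"
      using M L J unfolding L'_def infdim_subspaces_def subspace_def
      by (auto simp: linear_add linear_scale linear_0)
    moreover have "J ` L' = L"
      using L unfolding L'_def infdim_subspaces_def by auto
    moreover have "L' \<subseteq> M"
      unfolding L'_def by blast
    ultimately have "L' \<in> infdim_subspaces M"
      using L linear_image_finite_span_iff[OF J inj \<open>subspace L'\<close> \<open>L' \<subseteq> M\<close>]
      unfolding infdim_subspaces_def by auto
    then show "L \<in> (\<lambda>L. J ` L) ` infdim_subspaces M"
      using \<open>J ` L' = L\<close> by blast
  qed
qed

lemma dense_subset_approximating_sequence:
  fixes E :: "'a::real_normed_vector set"
  assumes "closure E = UNIV" "\<And>k. \<eta> k > 0"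
  obtains e where "\<And>k. e k \<in> E" "\<And>k. norm (e k - x k) < \<eta> k"
proof -
  have "\<forall>k. \<exists>y. y \<in> E \<and> norm (y - x k) < \<eta> k"
  proof
    fix k
    have "\<forall>\<epsilon>>0. \<exists>y\<in>E. norm (y - x k) < \<epsilon>"
      using closure_approachable[of "x k" E] assms(1) by (simp add: dist_norm)
    then show "\<exists>y. y \<in> E \<and> norm (y - x k) < \<eta> k"
      using assms(2)[of k] by blast
  qed
  from choice[OF this] show thesis
    using that by blast
qed

lemma near_identity_on_span_range:
  fixes x e :: "nat \<Rightarrow> 'a::real_normed_vector"
  assumes bc: "\<And>n. bounded_coefficients n x C" and J: "linear J" "\<And>k. J (x k) = e k"
    and close: "\<And>k. norm (e k - x k) \<le> \<delta> / (2 ^ Suc k * C k)" and "\<delta> \<ge> 0"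
    and "m \<in> span (range x)"
  shows "norm (J m - m) \<le> \<delta> * norm m"
proof -
  obtain n a where m: "m = (\<Sum>j<n. a j *\<^sub>R x j)"
    using \<open>m \<in> span (range x)\<close> span_range_obtain_sum by blast
  have "J m - m = (\<Sum>j<n. a j *\<^sub>R (e j - x j))"
    using J by (simp add: m linear_sum linear_scale scaleR_diff_right sum_subtractf)
  then have "norm (J m - m) \<le> (\<Sum>j<n. \<bar>a j\<bar> * norm (e j - x j))"
    using norm_sum[of "\<lambda>j. a j *\<^sub>R (e j - x j)" "{..<n}"] by simp
  also have "\<dots> \<le> (\<Sum>j<n. \<delta> * norm m * (1 / 2) ^ Suc j)"
  proof (rule sum_mono)
    fix j assume "j \<in> {..<n}"
    then have "\<bar>a j\<bar> \<le> C j * norm m"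
      using bounded_coefficientsD[OF bc] m by simp
    then have "\<bar>a j\<bar> * norm (e j - x j) \<le> C j * norm m * (\<delta> / (2 ^ Suc j * C j))"
      using close[of j] by (intro mult_mono) auto
    also have "\<dots> = \<delta> * norm m * (1 / 2) ^ Suc j"
      using bounded_coefficients_pos[OF bc, of j "Suc j"] by (simp add: field_simps)
    finally show "\<bar>a j\<bar> * norm (e j - x j) \<le> \<delta> * norm m * (1 / 2) ^ Suc j" .
  qed
  also have "\<dots> = \<delta> * norm m * (1 - (1 / 2) ^ n)"
    by (induction n) (simp_all add: algebra_simps)
  also have "\<dots> \<le> \<delta> * norm m"
    using \<open>\<delta> \<ge> 0\<close> by (simp add: mult_left_le)
  finally show ?thesis .
qed

lemma near_identity_map_into_dense_subspace:
  fixes M E :: "'a::real_normed_vector set"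
  assumes M: "subspace M" "\<nexists>B. finite B \<and> span B = M"
    and E: "subspace E" "closure E = UNIV" and \<delta>: "0 < \<delta>" "\<delta> < 1"
  obtains M' J where "M' \<in> infdim_subspaces M" "linear J" "inj_on J M'" "J ` M' \<in> infdim_subspaces E"
    "\<And>m. m \<in> M' \<Longrightarrow> norm (J m - m) \<le> \<delta> * norm m"
proof -
  obtain x C where xM: "range x \<subseteq> M" and bc: "\<And>n. bounded_coefficients n x C"
    using infinite_dimensional_bounded_coefficients_sequence[OF M] by blast
  note indep = bounded_coefficients_sequence_independent[OF bc]
  define M' where "M' = span (range x)"
  have "infinite (range x)"
    using range_inj_infinite[OF bounded_coefficients_sequence_inj[OF bc]] .
  then have "\<nexists>B. finite B \<and> span B = M'"
    using independent_span_bound[OF _ indep] span_superset unfolding M'_def by blast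
  then have M': "M' \<in> infdim_subspaces M"
    unfolding infdim_subspaces_def M'_def using span_minimal[OF xM M(1)] by auto
  have "\<delta> / (2 ^ Suc k * C k) > 0" for k
    using \<delta> bounded_coefficients_pos[OF bc, of k "Suc k"] by simp
  then obtain e where e: "\<And>k. e k \<in> E" "\<And>k. norm (e k - x k) < \<delta> / (2 ^ Suc k * C k)"
    using dense_subset_approximating_sequence[OF E(2), where \<eta> = "\<lambda>k. \<delta> / (2 ^ Suc k * C k)" and x = x]
    by blast
  obtain J where J: "linear J" "\<And>v. v \<in> range x \<Longrightarrow> J v = e (inv x v)"
    using linear_independent_extend[OF indep, of "\<lambda>v. e (inv x v)"] by blast
  have Jx: "J (x k) = e k" for k
    using J(2)[of "x k"] bounded_coefficients_sequence_inj[OF bc] by simp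
  have near: "norm (J m - m) \<le> \<delta> * norm m" if "m \<in> M'" for m
    using near_identity_on_span_range[OF bc J(1) Jx less_imp_le[OF e(2)]] \<delta> that
    unfolding M'_def by simp
  have "subspace M'"
    unfolding M'_def by simp
  have inj: "inj_on J M'"
    using near_identity_inj_on[OF J(1) \<open>subspace M'\<close> near \<delta>(2)] .
  have "J ` M' = span (range e)"
    using linear_span_image[OF J(1), of "range x"] by (simp add: M'_def image_image Jx)
  also have "\<dots> \<subseteq> E"
    using e(1) E(1) by (intro span_minimal) auto
  finally have "J ` M' \<subseteq> E" .
  have "J ` M' \<in> infdim_subspaces (J ` M')"
    unfolding infdim_subspaces_linear_image[OF J(1) inj \<open>subspace M'\<close>]
    using infdim_subspaces_self[OF M'] by blast
  then have "J ` M' \<in> infdim_subspaces E"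
    using \<open>J ` M' \<subseteq> E\<close> by (simp add: infdim_subspaces_def)
  then show thesis
    using that M' J(1) inj near by blast
qed

lemma infdim_subspaces_dense_subspace_empty_iff:
  fixes E :: "'a::real_normed_vector set"
  assumes E: "subspace E" "closure E = UNIV"
  shows "infdim_subspaces E = {} \<longleftrightarrow> infdim_subspaces (UNIV :: 'a set) = {}"
proof
  assume empty: "infdim_subspaces E = {}"
  show "infdim_subspaces (UNIV :: 'a set) = {}"
  proof (rule ccontr)
    assume "infdim_subspaces (UNIV :: 'a set) \<noteq> {}"
    then obtain M where "M \<in> infdim_subspaces (UNIV :: 'a set)"
      by blast
    then have M: "subspace M" "\<nexists>B. finite B \<and> span B = M"
      by (auto simp: infdim_subspaces_def)
    have half: "(0::real) < 1 / 2" "(1 / 2 :: real) < 1"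
      by simp_all
    obtain M' :: "'a set" and J where "J ` M' \<in> infdim_subspaces E"
      using near_identity_map_into_dense_subspace[OF M E half] by blast
    then show False
      using empty by blast
  qed
qed (use infdim_subspaces_mono[OF subset_UNIV, of E] in blast)

section \<open>Operator norm and minimum modulus on subspaces\<close>

definition min_modulus_on :: "'a::real_normed_vector set \<Rightarrow> ('a \<Rightarrow> 'b::real_normed_vector) \<Rightarrow> real" where
  "min_modulus_on M S = (INF m \<in> unit_sphere_of M. norm (S m))"

lemma tau_op_eq_SUP_min_modulus_on:
  "tau_op D S = (SUP M \<in> infdim_subspaces D. min_modulus_on M S)"
  by (simp add: tau_op_def min_modulus_on_def)

lemma cSUP_le_cSUP_add:
  fixes f g :: "'a \<Rightarrow> real"
  assumes "A \<noteq> {}" "bdd_above (g ` B)" "\<And>a. a \<in> A \<Longrightarrow> \<exists>b\<in>B. f a \<le> g b + e"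
  shows "(SUP a\<in>A. f a) \<le> (SUP b\<in>B. g b) + e"
proof (rule cSUP_least[OF assms(1)])
  fix a assume "a \<in> A"
  then obtain b where "b \<in> B" "f a \<le> g b + e"
    using assms(3) by blast
  moreover have "g b \<le> (SUP b\<in>B. g b)"
    using \<open>b \<in> B\<close> assms(2) by (rule cSUP_upper)
  ultimately show "f a \<le> (SUP b\<in>B. g b) + e"
    by simp
qed

lemma cINF_le_cINF_add:
  fixes f g :: "'a \<Rightarrow> real"
  assumes "B \<noteq> {}" "bdd_below (f ` A)" "\<And>b. b \<in> B \<Longrightarrow> \<exists>a\<in>A. f a \<le> g b + e"
  shows "(INF a\<in>A. f a) \<le> (INF b\<in>B. g b) + e"
proof -
  have "(INF a\<in>A. f a) - e \<le> (INF b\<in>B. g b)"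
  proof (rule cINF_greatest[OF assms(1)])
    fix b assume "b \<in> B"
    then obtain a where "a \<in> A" "f a \<le> g b + e"
      using assms(3) by blast
    moreover have "(INF a\<in>A. f a) \<le> f a"
      using assms(2) \<open>a \<in> A\<close> by (rule cINF_lower)
    ultimately show "(INF a\<in>A. f a) - e \<le> g b"
      by simp
  qed
  then show ?thesis
    by simp
qed

lemma norm_le_onorm_unit_sphere:
  "bounded_linear T \<Longrightarrow> m \<in> unit_sphere_of L \<Longrightarrow> norm (T m) \<le> onorm T"
  using onorm[of T m] by (simp add: unit_sphere_of_def)

lemma bdd_above_norm_unit_sphere:
  "bounded_linear T \<Longrightarrow> bdd_above ((\<lambda>m. norm (T m)) ` unit_sphere_of L)"
  using norm_le_onorm_unit_sphere by (intro bdd_aboveI2) blast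

lemma bdd_below_norm_fun_image: "bdd_below ((\<lambda>m. norm (T m)) ` A)"
  by (intro bdd_belowI2[where m = 0]) simp

lemma unit_sphere_of_mono: "L \<subseteq> M \<Longrightarrow> unit_sphere_of L \<subseteq> unit_sphere_of M"
  by (auto simp: unit_sphere_of_def)

lemma opnorm_on_bounds:
  assumes T: "bounded_linear T" and ne: "unit_sphere_of L \<noteq> {}"
  shows "0 \<le> min_modulus_on L T" "min_modulus_on L T \<le> opnorm_on L T" "opnorm_on L T \<le> onorm T"
proof -
  obtain m where m: "m \<in> unit_sphere_of L"
    using ne by blast
  show "0 \<le> min_modulus_on L T"
    unfolding min_modulus_on_def using ne by (intro cINF_greatest) auto
  have "min_modulus_on L T \<le> norm (T m)"
    unfolding min_modulus_on_def using bdd_below_norm_fun_image m by (rule cINF_lower)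
  also have "norm (T m) \<le> opnorm_on L T"
    unfolding opnorm_on_def using m bdd_above_norm_unit_sphere[OF T] by (rule cSUP_upper)
  finally show "min_modulus_on L T \<le> opnorm_on L T" .
  show "opnorm_on L T \<le> onorm T"
    unfolding opnorm_on_def using ne norm_le_onorm_unit_sphere[OF T] by (intro cSUP_least) auto
qed

lemma opnorm_on_mono:
  assumes "bounded_linear T" "unit_sphere_of L \<noteq> {}" "L \<subseteq> M"
  shows "opnorm_on L T \<le> opnorm_on M T"
  unfolding opnorm_on_def
  by (rule cSUP_subset_mono[OF assms(2) bdd_above_norm_unit_sphere[OF assms(1)] unit_sphere_of_mono[OF assms(3)]]) simp

lemma min_modulus_on_antimono:
  assumes "unit_sphere_of L \<noteq> {}" "L \<subseteq> M"
  shows "min_modulus_on M T \<le> min_modulus_on L T"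
  unfolding min_modulus_on_def
  by (rule cINF_superset_mono[OF assms(1) bdd_below_norm_fun_image unit_sphere_of_mono[OF assms(2)]]) simp

lemma norm_bounded_linear_le_add_diff:
  "bounded_linear T \<Longrightarrow> norm (T a) \<le> norm (T b) + onorm T * norm (a - b)"
  using norm_triangle_sub[of "T a" "T b"] onorm[of T "a - b"]
  by (simp add: linear_diff bounded_linear.linear)

lemma opnorm_on_le_of_close:
  assumes T: "bounded_linear T" and "unit_sphere_of A \<noteq> {}"
    and close: "\<And>a. a \<in> unit_sphere_of A \<Longrightarrow> \<exists>b\<in>unit_sphere_of B. norm (a - b) \<le> r"
  shows "opnorm_on A T \<le> opnorm_on B T + onorm T * r"
  unfolding opnorm_on_def
proof (rule cSUP_le_cSUP_add[OF assms(2) bdd_above_norm_unit_sphere[OF T]])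
  fix a assume "a \<in> unit_sphere_of A"
  then obtain b where b: "b \<in> unit_sphere_of B" "norm (a - b) \<le> r"
    using close by blast
  have "norm (T a) \<le> norm (T b) + onorm T * norm (a - b)"
    using T by (rule norm_bounded_linear_le_add_diff)
  also have "\<dots> \<le> norm (T b) + onorm T * r"
    using b(2) onorm_pos_le[OF T] by (simp add: mult_left_mono)
  finally show "\<exists>b\<in>unit_sphere_of B. norm (T a) \<le> norm (T b) + onorm T * r"
    using b(1) by blast
qed

lemma min_modulus_on_le_of_close:
  assumes T: "bounded_linear T" and "unit_sphere_of B \<noteq> {}"
    and close: "\<And>b. b \<in> unit_sphere_of B \<Longrightarrow> \<exists>a\<in>unit_sphere_of A. norm (a - b) \<le> r"
  shows "min_modulus_on A T \<le> min_modulus_on B T + onorm T * r"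
  unfolding min_modulus_on_def
proof (rule cINF_le_cINF_add[OF assms(2) bdd_below_norm_fun_image])
  fix b assume "b \<in> unit_sphere_of B"
  then obtain a where a: "a \<in> unit_sphere_of A" "norm (a - b) \<le> r"
    using close by blast
  have "norm (T a) \<le> norm (T b) + onorm T * norm (a - b)"
    using T by (rule norm_bounded_linear_le_add_diff)
  also have "\<dots> \<le> norm (T b) + onorm T * r"
    using a(2) onorm_pos_le[OF T] by (simp add: mult_left_mono)
  finally show "\<exists>a\<in>unit_sphere_of A. norm (T a) \<le> norm (T b) + onorm T * r"
    using a(1) by blast
qed

lemma norm_sgn_diff_le:
  assumes "norm u = 1"
  shows "norm (sgn v - u) \<le> 2 * norm (v - u)"
proof -
  have "norm (sgn v - v) \<le> norm (v - u)"
  proof (cases "v = 0")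
    case False
    have "sgn v - v = (1 - norm v) *\<^sub>R sgn v"
      using False by (simp add: sgn_div_norm algebra_simps)
    then have "norm (sgn v - v) = \<bar>norm u - norm v\<bar>"
      using False assms by (simp add: norm_sgn)
    also have "\<dots> \<le> norm (v - u)"
      using norm_triangle_ineq3[of u v] by (simp add: norm_minus_commute)
    finally show ?thesis .
  qed simp
  then show ?thesis
    using norm_triangle_ineq[of "sgn v - v" "v - u"] by simp
qed

lemma near_identity_image_unit_sphere_approx:
  fixes J :: "'a::real_normed_vector \<Rightarrow> 'a"
  assumes J: "linear J" and near: "\<And>m. m \<in> L \<Longrightarrow> norm (J m - m) \<le> \<delta> * norm m"
    and L: "subspace L" and \<delta>: "0 \<le> \<delta>" "\<delta> \<le> 1 / 2" and n: "n \<in> unit_sphere_of (J ` L)"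
  obtains u where "u \<in> unit_sphere_of L" "norm (n - u) \<le> 4 * \<delta>"
proof -
  obtain m where m: "m \<in> L" "n = J m" "norm (J m) = 1"
    using n by (auto simp: unit_sphere_of_def)
  have "m \<noteq> 0"
    using m J by (auto simp: linear_0)
  have "norm m \<le> norm (J m) + norm (J m - m)"
    using norm_triangle_sub[of m "J m"] by (simp add: norm_minus_commute)
  then have "norm m \<le> 1 + \<delta> * norm m"
    using near[OF m(1)] m(3) by simp
  moreover have "\<delta> * norm m \<le> 1 / 2 * norm m"
    using \<delta> by (intro mult_right_mono) auto
  ultimately have "norm m \<le> 2"
    by linarith
  have "norm (sgn m - n) \<le> 2 * norm (m - n)"
    using m by (intro norm_sgn_diff_le) simp
  also have "\<dots> \<le> 2 * (\<delta> * norm m)"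
    using near[OF m(1)] m(2) by (simp add: norm_minus_commute)
  also have "\<dots> \<le> 4 * \<delta>"
    using \<open>norm m \<le> 2\<close> \<delta> mult_left_mono[of "norm m" 2 \<delta>] by simp
  finally have "norm (n - sgn m) \<le> 4 * \<delta>"
    by (simp add: norm_minus_commute)
  moreover have "sgn m \<in> unit_sphere_of L"
    using m(1) L \<open>m \<noteq> 0\<close> by (simp add: unit_sphere_of_def sgn_div_norm subspace_scale norm_sgn)
  ultimately show thesis
    using that by blast
qed

lemma unit_sphere_approx_by_near_identity_image:
  fixes J :: "'a::real_normed_vector \<Rightarrow> 'a"
  assumes J: "linear J" and near: "\<And>m. m \<in> L \<Longrightarrow> norm (J m - m) \<le> \<delta> * norm m"
    and L: "subspace L" and "\<delta> < 1" and u: "u \<in> unit_sphere_of L"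
  obtains n where "n \<in> unit_sphere_of (J ` L)" "norm (n - u) \<le> 2 * \<delta>"
proof -
  have u: "u \<in> L" "norm u = 1"
    using u by (auto simp: unit_sphere_of_def)
  have Ju: "norm (J u - u) \<le> \<delta>"
    using near[OF u(1)] u(2) by simp
  then have "J u \<noteq> 0"
    using u(2) \<open>\<delta> < 1\<close> by auto
  have "sgn (J u) = J (u /\<^sub>R norm (J u))"
    using J by (simp add: sgn_div_norm linear_scale)
  then have "sgn (J u) \<in> J ` L"
    using u(1) L by (simp add: subspace_scale)
  then have "sgn (J u) \<in> unit_sphere_of (J ` L)"
    using \<open>J u \<noteq> 0\<close> by (simp add: unit_sphere_of_def norm_sgn)
  moreover have "norm (sgn (J u) - u) \<le> 2 * \<delta>"
    using norm_sgn_diff_le[OF u(2), of "J u"] Ju by simp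
  ultimately show thesis
    using that by blast
qed

lemma near_identity_image_opnorm_min_modulus:
  assumes T: "bounded_linear T" and J: "linear J" and L: "subspace L" "unit_sphere_of L \<noteq> {}"
    and near: "\<And>m. m \<in> L \<Longrightarrow> norm (J m - m) \<le> \<delta> * norm m" and \<delta>: "0 \<le> \<delta>" "\<delta> \<le> 1 / 2"
  shows "\<bar>opnorm_on (J ` L) T - opnorm_on L T\<bar> \<le> onorm T * (4 * \<delta>)"
    and "\<bar>min_modulus_on (J ` L) T - min_modulus_on L T\<bar> \<le> onorm T * (4 * \<delta>)"
proof -
  have image_to_L: "\<exists>u\<in>unit_sphere_of L. norm (n - u) \<le> 4 * \<delta>" if "n \<in> unit_sphere_of (J ` L)" for n
    using near_identity_image_unit_sphere_approx[OF J near L(1) \<delta> that] by blast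
  have L_to_image: "\<exists>n\<in>unit_sphere_of (J ` L). norm (n - u) \<le> 4 * \<delta>" if u: "u \<in> unit_sphere_of L" for u
  proof -
    have "\<delta> < 1"
      using \<delta>(2) by simp
    then obtain n where "n \<in> unit_sphere_of (J ` L)" "norm (n - u) \<le> 2 * \<delta>"
      using unit_sphere_approx_by_near_identity_image[OF J near L(1) _ u] by blast
    then show ?thesis
      using \<delta>(1) by (intro bexI[of _ n]) auto
  qed
  have ne: "unit_sphere_of (J ` L) \<noteq> {}"
    using L(2) L_to_image by blast
  have "opnorm_on (J ` L) T \<le> opnorm_on L T + onorm T * (4 * \<delta>)"
    using image_to_L by (intro opnorm_on_le_of_close[OF T ne]) blast
  moreover have "opnorm_on L T \<le> opnorm_on (J ` L) T + onorm T * (4 * \<delta>)"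
    using L_to_image by (intro opnorm_on_le_of_close[OF T L(2)]) (metis norm_minus_commute)
  ultimately show "\<bar>opnorm_on (J ` L) T - opnorm_on L T\<bar> \<le> onorm T * (4 * \<delta>)"
    by linarith
  have "min_modulus_on (J ` L) T \<le> min_modulus_on L T + onorm T * (4 * \<delta>)"
    using L_to_image by (intro min_modulus_on_le_of_close[OF T L(2)]) blast
  moreover have "min_modulus_on L T \<le> min_modulus_on (J ` L) T + onorm T * (4 * \<delta>)"
    using image_to_L by (intro min_modulus_on_le_of_close[OF T ne]) (metis norm_minus_commute)
  ultimately show "\<bar>min_modulus_on (J ` L) T - min_modulus_on L T\<bar> \<le> onorm T * (4 * \<delta>)"
    by linarith
qed

section \<open>The quantities for a dense subspace\<close>

lemma dense_subspace_approximates_infdim_subspace: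
  fixes T :: "'a::real_normed_vector \<Rightarrow> 'b::real_normed_vector"
  assumes T: "bounded_linear T" and E: "subspace E" "closure E = UNIV"
    and M: "M \<in> infdim_subspaces UNIV" and "\<epsilon> > 0"
  obtains N where "N \<in> infdim_subspaces E"
    "\<And>L. L \<in> infdim_subspaces N \<Longrightarrow> \<exists>L'\<in>infdim_subspaces M.
       \<bar>opnorm_on L' T - opnorm_on L T\<bar> \<le> \<epsilon> \<and> \<bar>min_modulus_on L' T - min_modulus_on L T\<bar> \<le> \<epsilon>"
proof -
  define \<delta> where "\<delta> = min (1 / 2) (\<epsilon> / (4 * onorm T + 1))"
  have "onorm T \<ge> 0"
    using onorm_pos_le[OF T] .
  then have \<delta>: "0 < \<delta>" "\<delta> \<le> 1 / 2" "onorm T * (4 * \<delta>) \<le> \<epsilon>"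
    using \<open>\<epsilon> > 0\<close> by (auto simp: \<delta>_def min_def field_simps)
  have "subspace M" "\<nexists>B. finite B \<and> span B = M"
    using M by (auto simp: infdim_subspaces_def)
  moreover have "\<delta> < 1"
    using \<delta>(2) by simp
  ultimately obtain M' J where M': "M' \<in> infdim_subspaces M" and J: "linear J" "inj_on J M'"
    and JM': "J ` M' \<in> infdim_subspaces E" and near: "\<And>m. m \<in> M' \<Longrightarrow> norm (J m - m) \<le> \<delta> * norm m"
    using near_identity_map_into_dense_subspace[OF _ _ E \<open>\<delta> > 0\<close>] by blast
  have "subspace M'" "M' \<subseteq> M"
    using M' by (auto simp: infdim_subspaces_def)
  show thesis
  proof (rule that[OF JM'])
    fix L assume "L \<in> infdim_subspaces (J ` M')"
    then obtain L' where L': "L' \<in> infdim_subspaces M'" "L = J ` L'"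
      unfolding infdim_subspaces_linear_image[OF J \<open>subspace M'\<close>] by blast
    then have "subspace L'" "L' \<subseteq> M'"
      by (auto simp: infdim_subspaces_def)
    have near_L': "\<And>m. m \<in> L' \<Longrightarrow> norm (J m - m) \<le> \<delta> * norm m"
      using near \<open>L' \<subseteq> M'\<close> by blast
    note perturb = near_identity_image_opnorm_min_modulus[OF T J(1) \<open>subspace L'\<close>
        unit_sphere_of_infdim_subspace[OF L'(1)] near_L' less_imp_le[OF \<delta>(1)] \<delta>(2)]
    have "\<bar>opnorm_on L' T - opnorm_on L T\<bar> \<le> \<epsilon>" "\<bar>min_modulus_on L' T - min_modulus_on L T\<bar> \<le> \<epsilon>"
      unfolding L'(2) using perturb \<delta>(3) by linarith+
    moreover have "L' \<in> infdim_subspaces M"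
      using L'(1) infdim_subspaces_mono[OF \<open>M' \<subseteq> M\<close>] by blast
    ultimately show "\<exists>L'\<in>infdim_subspaces M.
       \<bar>opnorm_on L' T - opnorm_on L T\<bar> \<le> \<epsilon> \<and> \<bar>min_modulus_on L' T - min_modulus_on L T\<bar> \<le> \<epsilon>"
      by blast
  qed
qed

lemma infdim_subspace_opnorm_bounds:
  assumes "bounded_linear T" "M \<in> infdim_subspaces D"
  shows "0 \<le> min_modulus_on M T" "min_modulus_on M T \<le> opnorm_on M T" "opnorm_on M T \<le> onorm T"
  using opnorm_on_bounds[OF assms(1) unit_sphere_of_infdim_subspace[OF assms(2)]] by auto

lemma bdd_below_opnorm_on:
  "bounded_linear T \<Longrightarrow> bdd_below ((\<lambda>M. opnorm_on M T) ` infdim_subspaces D)"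
  by (rule bdd_belowI2[where m = 0]) (meson infdim_subspace_opnorm_bounds order_trans)

lemma bdd_above_min_modulus_on:
  "bounded_linear T \<Longrightarrow> bdd_above ((\<lambda>M. min_modulus_on M T) ` infdim_subspaces D)"
  by (rule bdd_aboveI2[where M = "onorm T"]) (meson infdim_subspace_opnorm_bounds order_trans)

lemma Gamma_op_bounds:
  assumes T: "bounded_linear T" and M: "M \<in> infdim_subspaces D"
  shows "0 \<le> Gamma_op M T" "Gamma_op M T \<le> onorm T"
proof -
  show "0 \<le> Gamma_op M T"
    unfolding Gamma_op_def using infdim_subspaces_self[OF M]
    by (intro cINF_greatest) (auto intro: infdim_subspace_opnorm_bounds[OF T] order_trans)
  show "Gamma_op M T \<le> onorm T"
    unfolding Gamma_op_def using infdim_subspaces_self[OF M] bdd_below_opnorm_on[OF T]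
    by (intro cINF_lower2[where x = M]) (auto intro: infdim_subspace_opnorm_bounds[OF T])
qed

lemma tau_op_bounds:
  assumes T: "bounded_linear T" and M: "M \<in> infdim_subspaces D"
  shows "0 \<le> tau_op M T" "tau_op M T \<le> onorm T"
proof -
  show "0 \<le> tau_op M T"
    unfolding tau_op_eq_SUP_min_modulus_on using infdim_subspaces_self[OF M] bdd_above_min_modulus_on[OF T]
    by (intro cSUP_upper2[where x = M]) (auto intro: infdim_subspace_opnorm_bounds[OF T])
  show "tau_op M T \<le> onorm T"
    unfolding tau_op_eq_SUP_min_modulus_on using infdim_subspaces_self[OF M]
    by (intro cSUP_least) (auto intro: infdim_subspace_opnorm_bounds[OF T] order_trans)
qed

lemma bdd_above_Gamma_op:
  "bounded_linear T \<Longrightarrow> bdd_above ((\<lambda>M. Gamma_op M T) ` infdim_subspaces D)"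
  by (rule bdd_aboveI2[where M = "onorm T"]) (rule Gamma_op_bounds)

lemma bdd_below_tau_op:
  "bounded_linear T \<Longrightarrow> bdd_below ((\<lambda>M. tau_op M T) ` infdim_subspaces D)"
  by (rule bdd_belowI2[where m = 0]) (rule tau_op_bounds)

lemma dense_subspace_infdim_subspace_bounds:
  fixes T :: "'a::real_normed_vector \<Rightarrow> 'b::real_normed_vector"
  assumes T: "bounded_linear T" and E: "subspace E" "closure E = UNIV"
    and M: "M \<in> infdim_subspaces UNIV" and "\<epsilon> > 0"
  obtains N where "N \<in> infdim_subspaces E"
    "opnorm_on N T \<le> opnorm_on M T + \<epsilon>" "min_modulus_on M T \<le> min_modulus_on N T + \<epsilon>"
    "Gamma_op M T \<le> Gamma_op N T + \<epsilon>" "tau_op N T \<le> tau_op M T + \<epsilon>"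
proof -
  obtain N where N: "N \<in> infdim_subspaces E" and approx: "\<And>L. L \<in> infdim_subspaces N \<Longrightarrow>
      \<exists>L'\<in>infdim_subspaces M. \<bar>opnorm_on L' T - opnorm_on L T\<bar> \<le> \<epsilon> \<and>
        \<bar>min_modulus_on L' T - min_modulus_on L T\<bar> \<le> \<epsilon>"
    using dense_subspace_approximates_infdim_subspace[OF T E M \<open>\<epsilon> > 0\<close>] by blast
  obtain L' where L': "L' \<in> infdim_subspaces M" "\<bar>opnorm_on L' T - opnorm_on N T\<bar> \<le> \<epsilon>"
    "\<bar>min_modulus_on L' T - min_modulus_on N T\<bar> \<le> \<epsilon>"
    using approx[OF infdim_subspaces_self[OF N]] by blast
  have "L' \<subseteq> M" and sphere: "unit_sphere_of L' \<noteq> {}"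
    using L'(1) unit_sphere_of_infdim_subspace by (auto simp: infdim_subspaces_def)
  have "opnorm_on N T \<le> opnorm_on M T + \<epsilon>"
    using opnorm_on_mono[OF T sphere \<open>L' \<subseteq> M\<close>] L'(2) by linarith
  moreover have "min_modulus_on M T \<le> min_modulus_on N T + \<epsilon>"
    using min_modulus_on_antimono[OF sphere \<open>L' \<subseteq> M\<close>, of T] L'(3) by linarith
  moreover have "Gamma_op M T \<le> Gamma_op N T + \<epsilon>"
    unfolding Gamma_op_def
  proof (rule cINF_le_cINF_add)
    fix L assume "L \<in> infdim_subspaces N"
    then obtain L' where "L' \<in> infdim_subspaces M" "\<bar>opnorm_on L' T - opnorm_on L T\<bar> \<le> \<epsilon>"
      using approx by blast
    then show "\<exists>L'\<in>infdim_subspaces M. opnorm_on L' T \<le> opnorm_on L T + \<epsilon>"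
      by (intro bexI[of _ L']) (auto simp: abs_le_iff)
  qed (use infdim_subspaces_self[OF N] bdd_below_opnorm_on[OF T] in auto)
  moreover have "tau_op N T \<le> tau_op M T + \<epsilon>"
    unfolding tau_op_eq_SUP_min_modulus_on
  proof (rule cSUP_le_cSUP_add)
    fix L assume "L \<in> infdim_subspaces N"
    then obtain L' where "L' \<in> infdim_subspaces M" "\<bar>min_modulus_on L' T - min_modulus_on L T\<bar> \<le> \<epsilon>"
      using approx by blast
    then show "\<exists>L'\<in>infdim_subspaces M. min_modulus_on L T \<le> min_modulus_on L' T + \<epsilon>"
      by (intro bexI[of _ L']) (auto simp: abs_le_iff)
  qed (use infdim_subspaces_self[OF N] bdd_above_min_modulus_on[OF T] in auto)
  ultimately show thesis
    using that N by blast
qed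

lemma Gamma_op_dense_subspace:
  fixes T :: "'a::real_normed_vector \<Rightarrow> 'b::real_normed_vector"
  assumes T: "bounded_linear T" and E: "subspace E" "closure E = UNIV"
    and ne: "infdim_subspaces E \<noteq> {}"
  shows "Gamma_op E T = Gamma_op UNIV T"
proof (rule antisym)
  have sub: "infdim_subspaces E \<subseteq> infdim_subspaces UNIV"
    by (rule infdim_subspaces_mono) simp
  show "Gamma_op UNIV T \<le> Gamma_op E T"
    unfolding Gamma_op_def by (rule cINF_superset_mono[OF ne bdd_below_opnorm_on[OF T] sub]) simp
  show "Gamma_op E T \<le> Gamma_op UNIV T"
  proof (rule field_le_epsilon)
    fix \<epsilon> :: real assume "\<epsilon> > 0"
    show "Gamma_op E T \<le> Gamma_op UNIV T + \<epsilon>"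
      unfolding Gamma_op_def
    proof (rule cINF_le_cINF_add)
      fix M :: "'a set" assume "M \<in> infdim_subspaces UNIV"
      then obtain N where "N \<in> infdim_subspaces E" "opnorm_on N T \<le> opnorm_on M T + \<epsilon>"
        using dense_subspace_infdim_subspace_bounds[OF T E _ \<open>\<epsilon> > 0\<close>] by blast
      then show "\<exists>N\<in>infdim_subspaces E. opnorm_on N T \<le> opnorm_on M T + \<epsilon>"
        by blast
    qed (use ne sub bdd_below_opnorm_on[OF T] in auto)
  qed
qed

lemma Delta_op_dense_subspace:
  fixes T :: "'a::real_normed_vector \<Rightarrow> 'b::real_normed_vector"
  assumes T: "bounded_linear T" and E: "subspace E" "closure E = UNIV"
    and ne: "infdim_subspaces E \<noteq> {}"
  shows "Delta_op E T = Delta_op UNIV T"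
proof (rule antisym)
  have sub: "infdim_subspaces E \<subseteq> infdim_subspaces UNIV"
    by (rule infdim_subspaces_mono) simp
  show "Delta_op E T \<le> Delta_op UNIV T"
    unfolding Delta_op_def by (rule cSUP_subset_mono[OF ne bdd_above_Gamma_op[OF T] sub]) simp
  show "Delta_op UNIV T \<le> Delta_op E T"
  proof (rule field_le_epsilon)
    fix \<epsilon> :: real assume "\<epsilon> > 0"
    show "Delta_op UNIV T \<le> Delta_op E T + \<epsilon>"
      unfolding Delta_op_def
    proof (rule cSUP_le_cSUP_add)
      fix M :: "'a set" assume "M \<in> infdim_subspaces UNIV"
      then obtain N where "N \<in> infdim_subspaces E" "Gamma_op M T \<le> Gamma_op N T + \<epsilon>"
        using dense_subspace_infdim_subspace_bounds[OF T E _ \<open>\<epsilon> > 0\<close>] by blast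
      then show "\<exists>N\<in>infdim_subspaces E. Gamma_op M T \<le> Gamma_op N T + \<epsilon>"
        by blast
    qed (use ne sub bdd_above_Gamma_op[OF T] in auto)
  qed
qed

lemma tau_op_dense_subspace:
  fixes T :: "'a::real_normed_vector \<Rightarrow> 'b::real_normed_vector"
  assumes T: "bounded_linear T" and E: "subspace E" "closure E = UNIV"
    and ne: "infdim_subspaces E \<noteq> {}"
  shows "tau_op E T = tau_op UNIV T"
proof (rule antisym)
  have sub: "infdim_subspaces E \<subseteq> infdim_subspaces UNIV"
    by (rule infdim_subspaces_mono) simp
  show "tau_op E T \<le> tau_op UNIV T"
    unfolding tau_op_eq_SUP_min_modulus_on
    by (rule cSUP_subset_mono[OF ne bdd_above_min_modulus_on[OF T] sub]) simp
  show "tau_op UNIV T \<le> tau_op E T"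
  proof (rule field_le_epsilon)
    fix \<epsilon> :: real assume "\<epsilon> > 0"
    show "tau_op UNIV T \<le> tau_op E T + \<epsilon>"
      unfolding tau_op_eq_SUP_min_modulus_on
    proof (rule cSUP_le_cSUP_add)
      fix M :: "'a set" assume "M \<in> infdim_subspaces UNIV"
      then obtain N where "N \<in> infdim_subspaces E" "min_modulus_on M T \<le> min_modulus_on N T + \<epsilon>"
        using dense_subspace_infdim_subspace_bounds[OF T E _ \<open>\<epsilon> > 0\<close>] by blast
      then show "\<exists>N\<in>infdim_subspaces E. min_modulus_on M T \<le> min_modulus_on N T + \<epsilon>"
        by blast
    qed (use ne sub bdd_above_min_modulus_on[OF T] in auto)
  qed
qed

lemma nabla_op_dense_subspace:
  fixes T :: "'a::real_normed_vector \<Rightarrow> 'b::real_normed_vector"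
  assumes T: "bounded_linear T" and E: "subspace E" "closure E = UNIV"
    and ne: "infdim_subspaces E \<noteq> {}"
  shows "nabla_op E T = nabla_op UNIV T"
proof (rule antisym)
  have sub: "infdim_subspaces E \<subseteq> infdim_subspaces UNIV"
    by (rule infdim_subspaces_mono) simp
  show "nabla_op UNIV T \<le> nabla_op E T"
    unfolding nabla_op_def by (rule cINF_superset_mono[OF ne bdd_below_tau_op[OF T] sub]) simp
  show "nabla_op E T \<le> nabla_op UNIV T"
  proof (rule field_le_epsilon)
    fix \<epsilon> :: real assume "\<epsilon> > 0"
    show "nabla_op E T \<le> nabla_op UNIV T + \<epsilon>"
      unfolding nabla_op_def
    proof (rule cINF_le_cINF_add)
      fix M :: "'a set" assume "M \<in> infdim_subspaces UNIV"
      then obtain N where "N \<in> infdim_subspaces E" "tau_op N T \<le> tau_op M T + \<epsilon>"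
        using dense_subspace_infdim_subspace_bounds[OF T E _ \<open>\<epsilon> > 0\<close>] by blast
      then show "\<exists>N\<in>infdim_subspaces E. tau_op N T \<le> tau_op M T + \<epsilon>"
        by blast
    qed (use ne sub bdd_below_tau_op[OF T] in auto)
  qed
qed

lemma graph_closure_imp_dense:
  fixes T :: "'a::real_normed_vector \<Rightarrow> 'b::real_normed_vector"
  assumes "{(x, T x) | x. True} \<subseteq> closure {(x, T x) | x. x \<in> E}"
  shows "closure E = UNIV"
proof -
  have "UNIV = fst ` {(x, T x) | x. True}"
    by force
  also have "\<dots> \<subseteq> fst ` closure {(x, T x) | x. x \<in> E}"
    using assms by (rule image_mono)
  also have "\<dots> \<subseteq> closure E"
    by (rule image_closure_subset) (auto intro: continuous_on_fst continuous_on_id closure_subset[THEN subsetD])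
  finally show ?thesis
    by blast
qed

theorem theorem1:
  fixes T :: "'a::real_normed_vector \<Rightarrow> 'b::real_normed_vector" and E :: "'a set"
  assumes "bounded_linear T"
    and "subspace E"
    and "{(x, T x) | x. True} \<subseteq> closure {(x, T x) | x. x \<in> E}"
  shows "Gamma_op E T = Gamma_op UNIV T \<and> Delta_op E T = Delta_op UNIV T
       \<and> tau_op E T = tau_op UNIV T \<and> nabla_op E T = nabla_op UNIV T"
proof -
  have dense: "closure E = UNIV"
    using graph_closure_imp_dense[OF assms(3)] .
  show ?thesis
  proof (cases "infdim_subspaces E = {}")
    case True
    then have "infdim_subspaces (UNIV :: 'a set) = {}"
      using infdim_subspaces_dense_subspace_empty_iff[OF assms(2) dense] by simp
    then show ?thesis
      using True by (simp add: Gamma_op_def Delta_op_def tau_op_def nabla_op_def)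
  next
    case False
    then show ?thesis
      using Gamma_op_dense_subspace Delta_op_dense_subspace tau_op_dense_subspace
        nabla_op_dense_subspace assms(1,2) dense by blast
  qed
qed

end
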